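(* Let $n\ge2$, $\alpha_2,\dots,\alpha_n\in\mathbb C$, and $T=I+\alpha_2D^2+\cdots+\alpha_nD^n\in\mathcal L(\mathcal P_n)$. Then for every $\varepsilon>0$ there exists $C_T(\varepsilon)>0$ such that for every $f\in\mathcal P_n$ of degree at least $2$ with simple roots, $$\tau(f)>C_T(\varepsilon)\ \Longrightarrow\ d_F\bigl(Z(f),Z(Tf)\bigr)<\varepsilon.$$
   Context: $\mathcal P_n$ is the complex vector space of polynomials of degree at most $n$, $D$ differentiation, $I$ identity. $Z(f)$ denotes the roots of $f$ counted with multiplicity (a multiset of size $\deg f$); $\deg Tf=\deg f$ for such $T$. For $f$ of degree $\ge2$ with at least two distinct roots, $\tau(f):=\min\{|w-v|:w\in Z(f),\ v\in Z(f')\setminus\{w\}\}$. For multisets $A=\{u_1,\dots,u_m\}$, $B=\{v_1,\dots,v_m\}$ in $\mathbb C$, $d_F(A,B)=\min_{\sigma}\max_{k}|u_k-v_{\sigma(k)}|$ over permutations $\sigma$ of $\{1,\dots,m\}$. *)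

theory Defs
  imports "HOL-Analysis.Analysis" "HOL-Computational_Algebra.Polynomial" "HOL-Combinatorics.Permutations"
begin

definition Top :: "nat \<Rightarrow> (nat \<Rightarrow> complex) \<Rightarrow> complex poly \<Rightarrow> complex poly" where
  "Top n \<alpha> f = f + (\<Sum>k=2..n. smult (\<alpha> k) ((pderiv ^^ k) f))"

text \<open>Z(f) is proots f (roots counted with multiplicity).
  tau(f) = min { |w - v| : w in Z(f), v in Z(f') - {w} }.\<close>
definition tau :: "complex poly \<Rightarrow> real" where
  "tau f = Min {cmod (w - v) | w v. w \<in># proots f \<and> v \<in># proots (pderiv f) \<and> v \<noteq> w}"

definition dF :: "complex multiset \<Rightarrow> complex multiset \<Rightarrow> real" where
  "dF A B = (let us = (SOME xs. mset xs = A); vs = (SOME ys. mset ys = B); m = size A in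
     Min ((\<lambda>\<sigma>. Max ((\<lambda>k. cmod (us ! k - vs ! (\<sigma> k))) ` {..<m})) ` {\<sigma>. \<sigma> permutes {..<m}}))"

end

theory Submission
  imports Defs "HOL-Computational_Algebra.Fundamental_Theorem_Algebra"
begin

(* Write T f = f + E f with E f = \<Sum>k=2..n. \<alpha> k f^(k), A = \<Sum>k=2..n. |\<alpha> k|,
   \<tau> = tau f and \<delta> = \<tau>/2.  The basic estimate: if all roots of a polynomial p of degree
   d lie at distance \<ge> \<delta> from z, then |p^(k)(z)| \<delta>^k \<le> d^k |p(z)|; so for d \<le> n \<le> \<delta> a
   weighted sum of derivatives of p at z is at most A (n/\<delta>) |p(z)|.  Roots of f are \<tau>-far
   from critical points of f, so every point is \<delta>-far from the roots of f or from those
   of f'.  For \<tau> large compared with n, A and a radius r this gives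
   (A) every root of T f lies within r of a root of f (elsewhere |E f| < |f|), and
   (B) on the r-disc around a root w of f, |(T f)' - f'(w)| \<le> |f'(w)|/2, so T f is
       injective there and its roots there are simple.
   (A) and (B) yield a permutation matching the roots of f and T f within r, so dF < r. *)

section \<open>Polynomial estimates away from the roots\<close>

lemma higher_pderiv_linear_factor:
  "(pderiv^^Suc k) ([:-a,1:] * q) = [:-a,1:] * (pderiv^^Suc k) q + smult (of_nat (Suc k)) ((pderiv^^k) q)"
proof (induction k)
  case 0
  have "pderiv ([:-a,1:] * q) = [:-a,1:] * pderiv q + q * pderiv [:-a,1:]"
    by (rule pderiv_mult)
  then show ?case by (simp add: pderiv_pCons)
next
  case (Suc k)
  have "(pderiv^^Suc (Suc k)) ([:-a,1:] * q) = pderiv ((pderiv^^Suc k) ([:-a,1:] * q))"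
    by simp
  also have "\<dots> = [:-a,1:] * (pderiv^^Suc (Suc k)) q + smult (of_nat (Suc (Suc k))) ((pderiv^^Suc k) q)"
    unfolding Suc by (simp add: pderiv_add pderiv_smult pderiv_mult pderiv_pCons smult_add_left algebra_simps)
  finally show ?case .
qed

lemma split_linear_factor:
  fixes p :: "complex poly"
  assumes "degree p = Suc m"
  obtains a q where "p = [:-a,1:] * q" "degree q = m"
proof -
  have "\<not> constant (poly p)"
    using assms by (simp add: constant_degree)
  then obtain a where "poly p a = 0"
    using fundamental_theorem_of_algebra by blast
  then obtain q where pq: "p = [:-a,1:] * q"
    by (metis dvd_def poly_eq_0_iff_dvd)
  then have "q \<noteq> 0" using assms by auto
  then have "degree ([:-a,1:] * q) = degree [:-a,1:] + degree q"
    by (intro degree_mult_eq) auto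
  then have "degree q = m" using assms pq by simp
  with pq show thesis by (rule that)
qed

lemma binomial_two_terms_le:
  fixes m :: real
  assumes "m \<ge> 0"
  shows "m^Suc k + of_nat (Suc k) * m^k \<le> (m + 1)^Suc k"
proof (induction k)
  case 0 then show ?case by simp
next
  case (Suc k)
  have "m^Suc (Suc k) + of_nat (Suc (Suc k)) * m^Suc k \<le> (m + 1) * (m^Suc k + of_nat (Suc k) * m^k)"
    using assms by (simp add: algebra_simps)
  also have "\<dots> \<le> (m + 1) * (m + 1)^Suc k"
    using Suc assms by (intro mult_left_mono) auto
  finally show ?case by simp
qed

lemma higher_pderiv_bound_far_from_roots:
  fixes p :: "complex poly" and z :: complex and \<delta> :: real
  assumes "\<delta> > 0" and "\<And>a. poly p a = 0 \<Longrightarrow> \<delta> \<le> cmod (z - a)"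
  shows "cmod (poly ((pderiv^^k) p) z) * \<delta>^k \<le> real (degree p)^k * cmod (poly p z)"
  using assms(2)
proof (induction "degree p" arbitrary: p k)
  case 0
  then obtain c where "p = [:c:]" by (metis degree_eq_zeroE)
  then have "(pderiv^^Suc j) p = 0" for j
    by (induction j) (auto simp: pderiv_pCons)
  then show ?case by (cases k) auto
next
  case (Suc m p)
  obtain a q where pq: "p = [:-a,1:] * q" and dq: "degree q = m"
    using split_linear_factor Suc.hyps(2)[symmetric] by metis
  have IH: "cmod (poly ((pderiv^^j) q) z) * \<delta>^j \<le> real m^j * cmod (poly q z)" for j
    using Suc.hyps(1)[of q] Suc.prems dq pq by auto
  have za: "\<delta> \<le> cmod (z - a)" using Suc.prems pq by auto
  have pz: "cmod (poly p z) = cmod (z - a) * cmod (poly q z)"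
    using pq by (simp add: norm_mult[symmetric] left_diff_distrib)
  show ?case
  proof (cases k)
    case 0 then show ?thesis by simp
  next
    case (Suc j)
    let ?q0 = "cmod (poly ((pderiv^^j) q) z)" and ?q1 = "cmod (poly ((pderiv^^Suc j) q) z)"
    have "poly ((pderiv^^Suc j) p) z = (z - a) * poly ((pderiv^^Suc j) q) z + of_nat (Suc j) * poly ((pderiv^^j) q) z"
      unfolding pq higher_pderiv_linear_factor by (simp add: left_diff_distrib)
    then have "cmod (poly ((pderiv^^Suc j) p) z) \<le> cmod (z - a) * ?q1 + of_nat (Suc j) * ?q0"
      by (metis norm_mult norm_of_nat norm_triangle_ineq)
    then have "cmod (poly ((pderiv^^Suc j) p) z) * \<delta>^Suc j
        \<le> cmod (z - a) * (?q1 * \<delta>^Suc j) + of_nat (Suc j) * (?q0 * \<delta>^j) * \<delta>"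
      using \<open>\<delta> > 0\<close> by (auto dest: mult_right_mono[of _ _ "\<delta>^Suc j"] simp: algebra_simps)
    also have "\<dots> \<le> cmod (z - a) * (real m^Suc j * cmod (poly q z)) + of_nat (Suc j) * (real m^j * cmod (poly q z)) * cmod (z - a)"
      using \<open>\<delta> > 0\<close> by (intro add_mono mult_left_mono[OF IH] mult_mono[OF mult_left_mono[OF IH] za]) auto
    also have "\<dots> = (real m^Suc j + of_nat (Suc j) * real m^j) * cmod (poly p z)"
      unfolding pz by (simp add: algebra_simps)
    also have "\<dots> \<le> (real m + 1)^Suc j * cmod (poly p z)"
      by (intro mult_right_mono binomial_two_terms_le) auto
    finally show ?thesis using Suc \<open>Suc m = degree p\<close> by (metis of_nat_Suc add.commute)
  qed
qed

lemma higher_pderiv_le_far_from_roots: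
  fixes P :: "complex poly"
  assumes "\<delta> > 0" "degree P \<le> n" "real n \<le> \<delta>" "\<And>a. poly P a = 0 \<Longrightarrow> \<delta> \<le> cmod (z - a)" "1 \<le> m"
  shows "cmod (poly ((pderiv^^m) P) z) \<le> (real n / \<delta>) * cmod (poly P z)"
proof -
  have "cmod (poly ((pderiv^^m) P) z) * \<delta>^m \<le> real (degree P)^m * cmod (poly P z)"
    using higher_pderiv_bound_far_from_roots assms(1,4) .
  also have "\<dots> \<le> real n^m * cmod (poly P z)"
    using assms(2) by (intro mult_right_mono power_mono) auto
  finally have "cmod (poly ((pderiv^^m) P) z) \<le> (real n / \<delta>)^m * cmod (poly P z)"
    using assms(1) by (simp add: field_simps)
  also have "\<dots> \<le> (real n / \<delta>)^1 * cmod (poly P z)"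
    using assms by (intro mult_right_mono power_decreasing) auto
  finally show ?thesis by simp
qed

lemma weighted_pderiv_sum_le_far_from_roots:
  fixes P :: "complex poly" and \<alpha> :: "nat \<Rightarrow> complex" and e :: "nat \<Rightarrow> nat"
  assumes "\<delta> > 0" "degree P \<le> n" "real n \<le> \<delta>" "\<And>a. poly P a = 0 \<Longrightarrow> \<delta> \<le> cmod (z - a)"
    and "\<And>k. k \<in> S \<Longrightarrow> 1 \<le> e k"
  shows "cmod (\<Sum>k\<in>S. \<alpha> k * poly ((pderiv^^e k) P) z) \<le> (\<Sum>k\<in>S. cmod (\<alpha> k)) * (real n / \<delta>) * cmod (poly P z)"
proof -
  have "cmod (\<Sum>k\<in>S. \<alpha> k * poly ((pderiv^^e k) P) z) \<le> (\<Sum>k\<in>S. cmod (\<alpha> k) * cmod (poly ((pderiv^^e k) P) z))"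
    by (metis (no_types, lifting) norm_mult norm_sum sum.cong)
  also have "\<dots> \<le> (\<Sum>k\<in>S. cmod (\<alpha> k) * ((real n / \<delta>) * cmod (poly P z)))"
    using higher_pderiv_le_far_from_roots[OF assms(1-4)] assms(5)
    by (intro sum_mono mult_left_mono) auto
  also have "\<dots> = (\<Sum>k\<in>S. cmod (\<alpha> k)) * (real n / \<delta>) * cmod (poly P z)"
    by (simp only: mult.assoc sum_distrib_right)
  finally show ?thesis .
qed

lemma poly_diff_bound_far_from_roots:
  fixes p :: "complex poly" and z w :: complex and t r :: real
  assumes "t > 0" "r \<ge> 0" "\<And>a. poly p a = 0 \<Longrightarrow> t \<le> cmod (w - a)" "cmod (z - w) \<le> r"
  shows "cmod (poly p z - poly p w) \<le> real (degree p) * (r/t) * (1 + r/t)^degree p * cmod (poly p w)"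
  using assms(3)
proof (induction "degree p" arbitrary: p)
  case 0
  then obtain c where "p = [:c:]" by (metis degree_eq_zeroE)
  then show ?case by simp
next
  case (Suc m p)
  define s where "s = r/t"
  have s0: "s \<ge> 0" using assms(1,2) by (simp add: s_def)
  obtain a q where pq: "p = [:-a,1:] * q" and dq: "degree q = m"
    using split_linear_factor Suc.hyps(2)[symmetric] by metis
  define B where "B = real m * s * (1 + s)^m"
  have B0: "B \<ge> 0" using s0 by (simp add: B_def)
  have IH: "cmod (poly q z - poly q w) \<le> B * cmod (poly q w)"
    using Suc.hyps(1)[of q] Suc.prems dq pq by (auto simp: B_def s_def)
  have wa: "t \<le> cmod (w - a)" using Suc.prems pq by auto
  have pw: "cmod (poly p w) = cmod (w - a) * cmod (poly q w)"
    using pq by (simp add: norm_mult[symmetric] left_diff_distrib)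
  have rq: "r * cmod (poly q w) \<le> s * cmod (poly p w)"
  proof -
    have "r * cmod (poly q w) * t \<le> r * cmod (poly q w) * cmod (w - a)"
      by (rule mult_left_mono[OF wa]) (use assms(2) in simp)
    then have "r * cmod (poly q w) * t \<le> r * cmod (poly p w)"
      by (simp add: pw mult_ac)
    then show ?thesis using assms(1) by (simp add: s_def field_simps)
  qed
  have za: "cmod (z - a) \<le> cmod (w - a) + r"
    using norm_triangle_ineq[of "z - w" "w - a"] assms(4) by simp
  have "poly p z - poly p w = (z - a) * (poly q z - poly q w) + (z - w) * poly q w"
    unfolding pq by (simp add: algebra_simps)
  then have "cmod (poly p z - poly p w) \<le> cmod (z - a) * cmod (poly q z - poly q w) + cmod (z - w) * cmod (poly q w)"
    by (metis norm_mult norm_triangle_ineq)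
  also have "\<dots> \<le> (cmod (w - a) + r) * (B * cmod (poly q w)) + r * cmod (poly q w)"
    by (intro add_mono mult_mono za IH mult_right_mono assms(4)) (use B0 assms(2) in auto)
  also have "\<dots> = B * (cmod (poly p w) + r * cmod (poly q w)) + r * cmod (poly q w)"
    using pw by (simp add: algebra_simps)
  also have "\<dots> \<le> B * (cmod (poly p w) + s * cmod (poly p w)) + s * cmod (poly p w)"
    by (intro add_mono mult_left_mono rq B0) auto
  also have "\<dots> = (real m * s * (1 + s)^Suc m + s) * cmod (poly p w)"
    by (simp add: B_def algebra_simps)
  also have "\<dots> \<le> (real (Suc m) * s * (1 + s)^Suc m) * cmod (poly p w)"
  proof (rule mult_right_mono)
    have "1 \<le> (1 + s)^Suc m" using s0 by (intro one_le_power) simp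
    then have "s \<le> s * (1 + s)^Suc m"
      using s0 by (simp add: mult_le_cancel_left1)
    then show "real m * s * (1 + s)^Suc m + s \<le> real (Suc m) * s * (1 + s)^Suc m"
      by (simp add: algebra_simps)
  qed simp
  finally show ?case using \<open>Suc m = degree p\<close> by (simp add: s_def)
qed

lemma tau_le_dist_root_critical:
  fixes f :: "complex poly"
  assumes "rsquarefree f" "poly f w = 0" "poly (pderiv f) v = 0"
  shows "tau f \<le> cmod (w - v)"
proof -
  let ?S = "{cmod (w - v) | w v. w \<in># proots f \<and> v \<in># proots (pderiv f) \<and> v \<noteq> w}"
  have f0: "f \<noteq> 0" using assms(1) by (simp add: rsquarefree_def)
  have f'0: "pderiv f \<noteq> 0" using assms(1,2) by (auto simp: rsquarefree_roots)
  have "v \<noteq> w" using assms by (auto simp: rsquarefree_roots)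
  then have "cmod (w - v) \<in> ?S" using assms(2,3) f0 f'0 by auto
  moreover have "finite ?S"
    by (rule finite_subset[where B = "(\<lambda>(w,v). cmod (w - v)) ` (set_mset (proots f) \<times> set_mset (proots (pderiv f)))"]) auto
  ultimately show ?thesis unfolding tau_def by (rule Min_le[rotated])
qed

lemma count_proots_eq_1:
  fixes p :: "complex poly"
  assumes "poly p z = 0" "poly (pderiv p) z \<noteq> 0"
  shows "count (proots p) z = 1"
proof -
  have p0: "p \<noteq> 0" using assms(2) by auto
  have "order z (pderiv p) = 0" using assms(2) order_root by blast
  then show ?thesis using order_pderiv[OF p0 assms(1)] p0 by simp
qed

text \<open>A polynomial whose derivative stays within \<open>|c|/2\<close> of a nonzero constant \<open>c\<close> on a
  convex set is injective there (mean value inequality applied to \<open>g(z) - c z\<close>).\<close>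
lemma poly_inj_on_if_pderiv_near_const:
  fixes g :: "complex poly" and c :: complex
  assumes "convex S" "c \<noteq> 0" "\<And>z. z \<in> S \<Longrightarrow> cmod (poly (pderiv g) z - c) \<le> cmod c / 2"
  shows "inj_on (poly g) S"
proof (rule inj_onI)
  fix x y assume xy: "x \<in> S" "y \<in> S" "poly g x = poly g y"
  have "cmod ((poly g x - c * x) - (poly g y - c * y)) \<le> cmod c / 2 * cmod (x - y)"
  proof (rule field_differentiable_bound[OF assms(1) _ assms(3) xy(1,2)])
    fix z assume "z \<in> S"
    show "((\<lambda>z. poly g z - c * z) has_field_derivative (poly (pderiv g) z - c)) (at z within S)"
      using DERIV_diff[OF poly_DERIV[of g z] DERIV_cmult_Id[of c z]] by (rule has_field_derivative_at_within)
  qed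
  then have "cmod c * cmod (x - y) \<le> cmod c / 2 * cmod (x - y)"
    using xy(3) by (simp add: right_diff_distrib[symmetric] norm_mult norm_minus_commute)
  then show "x = y" using assms(2) by simp
qed

lemma poly_Top: "poly (Top n \<alpha> f) z = poly f z + (\<Sum>k=2..n. \<alpha> k * poly ((pderiv^^k) f) z)"
  by (simp add: Top_def poly_sum)

lemma poly_pderiv_Top:
  "poly (pderiv (Top n \<alpha> f)) z = poly (pderiv f) z + (\<Sum>k=2..n. \<alpha> k * poly ((pderiv^^k) (pderiv f)) z)"
proof -
  have "pderiv (Top n \<alpha> f) = pderiv f + (\<Sum>k=2..n. smult (\<alpha> k) ((pderiv^^k) (pderiv f)))"
    using higher_pderiv_sum[of 1 "\<lambda>k. smult (\<alpha> k) ((pderiv^^k) f)" "{2..n}"]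
    by (simp add: Top_def pderiv_add pderiv_smult funpow_swap1)
  then show ?thesis by (simp add: poly_sum)
qed

text \<open>\<open>T\<close> only adds terms of lower degree, so it preserves the degree.\<close>
lemma degree_Top: "degree (Top n \<alpha> f) = degree f"
proof (cases "degree f = 0")
  case True
  then have "pderiv f = 0" by (simp add: pderiv_eq_0_iff)
  then have "(pderiv^^Suc j) f = 0" for j
    by (induction j) auto
  then have "(pderiv^^k) f = 0" if "k \<in> {2..n}" for k
    using that by (metis Suc_pred atLeastAtMost_iff not_numeral_le_zero zero_less_iff_neq_zero)
  then show ?thesis by (simp add: Top_def)
next
  case False
  have "degree (\<Sum>k=2..n. smult (\<alpha> k) ((pderiv^^k) f)) \<le> degree f - 1"
    by (intro degree_sum_le order.trans[OF degree_smult_le]) (auto simp: degree_higher_pderiv)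
  also have "\<dots> < degree f" using False by simp
  finally show ?thesis unfolding Top_def by (rule degree_add_eq_left)
qed

section \<open>Matching roots: a sufficient condition for \<open>dF A B < r\<close>\<close>

lemma permutation_in_unique_matching:
  fixes R :: "nat \<Rightarrow> nat \<Rightarrow> bool"
  assumes ex: "\<And>j. j < m \<Longrightarrow> \<exists>k<m. R k j"
    and uniq: "\<And>k j1 j2. k < m \<Longrightarrow> j1 < m \<Longrightarrow> j2 < m \<Longrightarrow> R k j1 \<Longrightarrow> R k j2 \<Longrightarrow> j1 = j2"
  shows "\<exists>\<sigma>. \<sigma> permutes {..<m} \<and> (\<forall>k<m. R k (\<sigma> k))"
proof -
  define \<phi> where "\<phi> j = (if j < m then SOME k. k < m \<and> R k j else j)" for j
  have \<phi>: "\<phi> j < m \<and> R (\<phi> j) j" if "j < m" for j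
    using someI_ex[OF ex[OF that]] that by (simp add: \<phi>_def)
  have "inj_on \<phi> {..<m}"
    by (rule inj_onI) (metis \<phi> uniq lessThan_iff)
  then have "\<phi> ` {..<m} = {..<m}"
    using \<phi> by (intro endo_inj_surj) auto
  with \<open>inj_on \<phi> {..<m}\<close> have "\<phi> permutes {..<m}"
    by (intro bij_imp_permutes) (auto simp: bij_betw_def \<phi>_def)
  then have inv: "inv \<phi> permutes {..<m}" "\<phi> (inv \<phi> k) = k" for k
    by (simp_all add: permutes_inv permutes_inverses)
  have "R k (inv \<phi> k)" if "k < m" for k
    using \<phi>[of "inv \<phi> k"] inv that by (metis lessThan_iff permutes_in_image)
  with inv show ?thesis by blast
qed

lemma index_unique_if_count_one:
  assumes "count (mset xs) (xs!i) = 1" "i < length xs" "j < length xs" "xs!j = xs!i"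
  shows "j = i"
proof (rule ccontr)
  assume "j \<noteq> i"
  have "{i, j} \<subseteq> {k. k < length xs \<and> xs!i = xs!k}" using assms by auto
  then have "card {i, j} \<le> card {k. k < length xs \<and> xs!i = xs!k}"
    by (rule card_mono[rotated]) auto
  also have "\<dots> = count (mset xs) (xs!i)"
    by (simp add: count_mset count_list_eq_length_filter length_filter_conv_card)
  finally show False using assms(1) \<open>j \<noteq> i\<close> by simp
qed

lemma dF_less_if_unique_matching:
  fixes A B :: "complex multiset" and r :: real
  assumes size: "size B = size A" "A \<noteq> {#}"
    and near: "\<And>b. b \<in># B \<Longrightarrow> \<exists>a\<in>#A. cmod (a - b) < r"
    and uniq: "\<And>a b b'. a \<in># A \<Longrightarrow> b \<in># B \<Longrightarrow> b' \<in># B \<Longrightarrow> cmod (a - b) < r \<Longrightarrow> cmod (a - b') < r \<Longrightarrow> b = b'"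
    and simple: "\<And>a b. a \<in># A \<Longrightarrow> b \<in># B \<Longrightarrow> cmod (a - b) < r \<Longrightarrow> count B b = 1"
  shows "dF A B < r"
proof -
  define us where "us = (SOME xs. mset xs = A)"
  define vs where "vs = (SOME ys. mset ys = B)"
  define m where "m = size A"
  have us: "mset us = A" unfolding us_def by (rule someI_ex) (rule ex_mset)
  have vs: "mset vs = B" unfolding vs_def by (rule someI_ex) (rule ex_mset)
  have len: "length us = m" "length vs = m"
    unfolding m_def using us vs size(1) by (metis size_mset)+
  have us_in: "us!k \<in># A" if "k < m" for k using us len that by (metis nth_mem set_mset_mset)
  have vs_in: "vs!j \<in># B" if "j < m" for j using vs len that by (metis nth_mem set_mset_mset)
  have near_index: "\<exists>k<m. cmod (us!k - vs!j) < r" if j: "j < m" for j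
  proof -
    obtain a where a: "a \<in># A" "cmod (a - vs!j) < r" using near[OF vs_in[OF j]] by blast
    then obtain k where "k < m" "us!k = a" using us len by (metis in_set_conv_nth set_mset_mset)
    with a show ?thesis by blast
  qed
  have unique_index: "j1 = j2"
    if "k < m" "j1 < m" "j2 < m" "cmod (us!k - vs!j1) < r" "cmod (us!k - vs!j2) < r" for k j1 j2
  proof -
    have "vs!j2 = vs!j1" using uniq[OF us_in vs_in vs_in] that by blast
    moreover have "count (mset vs) (vs!j1) = 1" using simple[OF us_in vs_in] that vs by blast
    ultimately show ?thesis using index_unique_if_count_one[of vs j1 j2] len that by simp
  qed
  have "\<exists>\<sigma>. \<sigma> permutes {..<m} \<and> (\<forall>k<m. cmod (us!k - vs!\<sigma> k) < r)"
    by (rule permutation_in_unique_matching) (fact near_index, fact unique_index)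
  then obtain \<sigma> where \<sigma>: "\<sigma> permutes {..<m}" and close: "\<forall>k<m. cmod (us!k - vs!\<sigma> k) < r"
    by blast
  let ?F = "\<lambda>\<sigma>. Max ((\<lambda>k. cmod (us!k - vs!\<sigma> k)) ` {..<m})"
  have "dF A B = Min (?F ` {\<sigma>. \<sigma> permutes {..<m}})"
    unfolding dF_def Let_def us_def[symmetric] vs_def[symmetric] m_def ..
  also have "\<dots> \<le> ?F \<sigma>"
    using \<sigma> finite_permutations[of "{..<m}"] by (intro Min_le) auto
  also have "\<dots> < r"
    using close size(2) by (subst Max_less_iff) (auto simp: m_def lessThan_empty_iff)
  finally show ?thesis .
qed

section \<open>Roots of \<open>T f\<close> for well separated \<open>f\<close>\<close>

definition tail_weight :: "nat \<Rightarrow> (nat \<Rightarrow> complex) \<Rightarrow> real" where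
  "tail_weight n \<alpha> = (\<Sum>k=2..n. cmod (\<alpha> k))"

locale well_separated =
  fixes n :: nat and \<alpha> :: "nat \<Rightarrow> complex" and f :: "complex poly" and r :: real
  assumes degree_ge: "2 \<le> degree f" and degree_le: "degree f \<le> n"
    and simple_roots: "rsquarefree f" and r_pos: "0 < r"
    and sep_degree: "2 * real n \<le> tau f"
    and sep_radius: "2 * r \<le> tau f"
    and sep_weight: "10 * tail_weight n \<alpha> * real n \<le> tau f"
    and sep_far: "2 * tail_weight n \<alpha> * real n ^ 2 < r * tau f"
    and sep_perturb: "4 * real n * 2 ^ n * r \<le> tau f"
begin

abbreviation "A \<equiv> tail_weight n \<alpha>"
abbreviation "\<delta> \<equiv> tau f / 2"

lemma tau_pos: "0 < tau f"
  using sep_degree degree_ge degree_le by linarith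

lemma A_nonneg: "0 \<le> A"
  by (simp add: tail_weight_def sum_nonneg)

lemma degree_pderiv_le: "degree (pderiv f) \<le> n"
  using degree_le by (simp add: degree_pderiv)

lemma root_critical_dist: "poly f w = 0 \<Longrightarrow> poly (pderiv f) v = 0 \<Longrightarrow> tau f \<le> cmod (w - v)"
  by (rule tau_le_dist_root_critical[OF simple_roots])

lemma weight_small: "A * (real n / \<delta>) \<le> 1/5"
  using sep_weight tau_pos by (simp add: field_simps)

text \<open>At a point \<open>u\<close> that is
  \<open>r\<close>-far from all roots of \<open>f\<close>, either \<open>u\<close> is \<open>\<delta>\<close>-close to a critical point, and then
  \<open>\<delta>\<close>-far from all roots, so \<open>|(T f - f)(u)| \<le> |f(u)|/5\<close>; or \<open>u\<close> is \<open>\<delta>\<close>-far from all critical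
  points, and \<open>|(T f - f)(u)| \<le> A (n/\<delta>) |f'(u)| \<le> A (n/\<delta>)(n/r) |f(u)| < |f(u)|\<close>.\<close>
lemma root_of_Top_near_root:
  assumes gu: "poly (Top n \<alpha> f) u = 0"
  shows "\<exists>w. poly f w = 0 \<and> cmod (u - w) < r"
proof (rule ccontr)
  assume "\<not> ?thesis"
  then have far: "\<And>a. poly f a = 0 \<Longrightarrow> r \<le> cmod (u - a)" by force
  then have fu: "poly f u \<noteq> 0" using r_pos by force
  let ?E = "\<Sum>k=2..n. \<alpha> k * poly ((pderiv^^k) f) u"
  have E: "cmod ?E = cmod (poly f u)"
    using gu by (simp add: poly_Top add_eq_0_iff norm_minus_commute)
  show False
  proof (cases "\<exists>v. poly (pderiv f) v = 0 \<and> cmod (u - v) < \<delta>")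
    case True
    then obtain v where v: "poly (pderiv f) v = 0" "cmod (u - v) < \<delta>" by blast
    have root_far: "\<delta> \<le> cmod (u - a)" if "poly f a = 0" for a
    proof -
      have "tau f \<le> cmod (a - v)" using root_critical_dist[OF that v(1)] .
      also have "\<dots> \<le> cmod (u - a) + cmod (u - v)"
        using norm_triangle_ineq4[of "u - a" "u - v"] by (simp add: norm_minus_commute)
      finally show ?thesis using v(2) by simp
    qed
    have "cmod ?E \<le> A * (real n / \<delta>) * cmod (poly f u)"
      unfolding tail_weight_def
      by (rule weighted_pderiv_sum_le_far_from_roots) (use tau_pos degree_le sep_degree root_far in auto)
    also have "\<dots> \<le> 1/5 * cmod (poly f u)"
      using weight_small by (intro mult_right_mono) auto
    finally show False using E fu by simp
  next
    case False
    then have crit_far: "\<And>v. poly (pderiv f) v = 0 \<Longrightarrow> \<delta> \<le> cmod (u - v)" by force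
    have "?E = (\<Sum>k=2..n. \<alpha> k * poly ((pderiv^^(k - 1)) (pderiv f)) u)"
    proof (rule sum.cong)
      fix k assume "k \<in> {2..n}"
      then have "(pderiv^^k) f = (pderiv^^(k - 1)) (pderiv f)"
        by (metis Suc_diff_1 atLeastAtMost_iff funpow_Suc_right o_apply less_le_trans pos2)
      then show "\<alpha> k * poly ((pderiv^^k) f) u = \<alpha> k * poly ((pderiv^^(k - 1)) (pderiv f)) u" by simp
    qed simp
    also have "cmod \<dots> \<le> A * (real n / \<delta>) * cmod (poly (pderiv f) u)"
      unfolding tail_weight_def
      by (rule weighted_pderiv_sum_le_far_from_roots) (use tau_pos degree_pderiv_le sep_degree crit_far in auto)
    finally have E_le: "cmod (poly f u) \<le> A * (real n / \<delta>) * cmod (poly (pderiv f) u)"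
      using E by simp
    have "cmod (poly ((pderiv^^1) f) u) * r^1 \<le> real (degree f)^1 * cmod (poly f u)"
      using higher_pderiv_bound_far_from_roots[OF r_pos far] .
    then have "cmod (poly (pderiv f) u) * r \<le> real n * cmod (poly f u)"
      using degree_le by (simp add: mult_right_mono order_trans)
    then have "cmod (poly (pderiv f) u) \<le> real n / r * cmod (poly f u)"
      using r_pos by (simp add: field_simps)
    then have "A * (real n / \<delta>) * cmod (poly (pderiv f) u) \<le> A * (real n / \<delta>) * (real n / r * cmod (poly f u))"
      using A_nonneg tau_pos by (intro mult_left_mono) auto
    with E_le have "cmod (poly f u) \<le> A * (real n / \<delta>) * (real n / r * cmod (poly f u))"
      by linarith
    also have "\<dots> = (2 * A * real n ^ 2 / (r * tau f)) * cmod (poly f u)"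
      by (simp add: power2_eq_square field_simps)
    also have "\<dots> < 1 * cmod (poly f u)"
      using sep_far r_pos tau_pos fu by (intro mult_strict_right_mono) auto
    finally show False by simp
  qed
qed

text \<open>Part (B): near a root \<open>w\<close> of \<open>f\<close>, \<open>(T f)'\<close> stays within \<open>|f'(w)|/2\<close> of \<open>f'(w)\<close>, since
  \<open>f'\<close> itself varies little there and the tail of \<open>(T f)'\<close> is small compared with \<open>f'\<close>.\<close>
lemma pderiv_Top_near_root:
  assumes w: "poly f w = 0" and zw: "cmod (z - w) < r"
  shows "cmod (poly (pderiv (Top n \<alpha> f)) z - poly (pderiv f) w) \<le> cmod (poly (pderiv f) w) / 2"
proof -
  let ?E = "\<Sum>k=2..n. \<alpha> k * poly ((pderiv^^k) (pderiv f)) z"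
  let ?d = "degree (pderiv f)"
  have crit_far: "\<delta> \<le> cmod (z - v)" if "poly (pderiv f) v = 0" for v
  proof -
    have "tau f \<le> cmod (w - v)" using root_critical_dist[OF w that] .
    also have "\<dots> \<le> cmod (z - w) + cmod (z - v)"
      using norm_triangle_ineq4[of "z - v" "z - w"] by (simp add: norm_minus_commute)
    finally show ?thesis using zw sep_radius by simp
  qed
  have "cmod (poly (pderiv f) z - poly (pderiv f) w) \<le> real ?d * (r / tau f) * (1 + r / tau f)^?d * cmod (poly (pderiv f) w)"
    using poly_diff_bound_far_from_roots[OF tau_pos _ root_critical_dist[OF w]] zw r_pos by simp
  also have "\<dots> \<le> (real n * (r / tau f) * 2^n) * cmod (poly (pderiv f) w)"
  proof (intro mult_right_mono mult_mono)
    have "(1 + r / tau f)^?d \<le> 2^?d"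
      using sep_radius tau_pos r_pos by (intro power_mono) auto
    also have "\<dots> \<le> 2^n" using degree_pderiv_le by (intro power_increasing) auto
    finally show "(1 + r / tau f)^?d \<le> 2^n" .
  qed (use degree_pderiv_le tau_pos r_pos in auto)
  also have "\<dots> \<le> 1/4 * cmod (poly (pderiv f) w)"
    using sep_perturb tau_pos by (intro mult_right_mono) (auto simp: field_simps)
  finally have f'_var: "cmod (poly (pderiv f) z - poly (pderiv f) w) \<le> 1/4 * cmod (poly (pderiv f) w)" .
  have "cmod ?E \<le> A * (real n / \<delta>) * cmod (poly (pderiv f) z)"
    unfolding tail_weight_def
    by (rule weighted_pderiv_sum_le_far_from_roots) (use tau_pos degree_pderiv_le sep_degree crit_far in auto)
  also have "\<dots> \<le> 1/5 * (5/4 * cmod (poly (pderiv f) w))"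
    using weight_small f'_var norm_triangle_ineq2[of "poly (pderiv f) z" "poly (pderiv f) w"]
    by (intro mult_mono) auto
  finally have E_le: "cmod ?E \<le> 1/4 * cmod (poly (pderiv f) w)" by simp
  have "poly (pderiv (Top n \<alpha> f)) z - poly (pderiv f) w = (poly (pderiv f) z - poly (pderiv f) w) + ?E"
    by (simp add: poly_pderiv_Top)
  then have "cmod (poly (pderiv (Top n \<alpha> f)) z - poly (pderiv f) w) \<le> cmod (poly (pderiv f) z - poly (pderiv f) w) + cmod ?E"
    by (metis norm_triangle_ineq)
  with f'_var E_le show ?thesis by linarith
qed

lemma Top_inj_near_root:
  assumes "poly f w = 0"
  shows "inj_on (poly (Top n \<alpha> f)) (ball w r)"
proof (rule poly_inj_on_if_pderiv_near_const)
  show "poly (pderiv f) w \<noteq> 0" using assms simple_roots by (auto simp: rsquarefree_roots)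
  show "cmod (poly (pderiv (Top n \<alpha> f)) z - poly (pderiv f) w) \<le> cmod (poly (pderiv f) w) / 2"
    if "z \<in> ball w r" for z
    using pderiv_Top_near_root[OF assms] that by (simp add: dist_norm norm_minus_commute)
qed simp

lemma Top_simple_root_near_root:
  assumes w: "poly f w = 0" and zw: "cmod (z - w) < r" and gz: "poly (Top n \<alpha> f) z = 0"
  shows "count (proots (Top n \<alpha> f)) z = 1"
proof (rule count_proots_eq_1[OF gz])
  have "poly (pderiv f) w \<noteq> 0" using w simple_roots by (auto simp: rsquarefree_roots)
  then show "poly (pderiv (Top n \<alpha> f)) z \<noteq> 0"
    using pderiv_Top_near_root[OF w zw] by auto
qed

theorem dF_roots_Top_less: "dF (proots f) (proots (Top n \<alpha> f)) < r"
proof (rule dF_less_if_unique_matching)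
  have f0: "f \<noteq> 0" and g0: "Top n \<alpha> f \<noteq> 0"
    using degree_ge degree_Top[of n \<alpha> f] by auto
  show "size (proots (Top n \<alpha> f)) = size (proots f)"
    by (simp add: size_proots_complex degree_Top)
  show "proots f \<noteq> {#}"
    using degree_ge by (metis size_proots_complex size_empty not_numeral_le_zero)
  show "\<exists>a\<in>#proots f. cmod (a - b) < r" if "b \<in># proots (Top n \<alpha> f)" for b
    using root_of_Top_near_root[of b] that f0 g0 by (auto simp: norm_minus_commute)
  show "b = b'" if "a \<in># proots f" "b \<in># proots (Top n \<alpha> f)" "b' \<in># proots (Top n \<alpha> f)"
    "cmod (a - b) < r" "cmod (a - b') < r" for a b b'
    using Top_inj_near_root[of a] that f0 g0 by (auto simp: dist_norm inj_on_def)
  show "count (proots (Top n \<alpha> f)) b = 1"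
    if "a \<in># proots f" "b \<in># proots (Top n \<alpha> f)" "cmod (a - b) < r" for a b
    using Top_simple_root_near_root[of a b] that f0 g0 by (auto simp: norm_minus_commute)
qed

end

text \<open>Given \<open>\<epsilon>\<close>, the hypotheses of the locale \<open>well_separated\<close> hold for \<open>r = min \<epsilon> 1\<close> as soon
  as \<open>tau f\<close> exceeds an explicit constant depending only on \<open>n\<close>, \<open>\<alpha>\<close> and \<open>\<epsilon>\<close>.\<close>
theorem theorem4p2:
  fixes n :: nat and \<alpha> :: "nat \<Rightarrow> complex"
  assumes "n \<ge> 2"
  shows "\<forall>\<epsilon>>0. \<exists>C>0. \<forall>f :: complex poly.
           degree f \<le> n \<and> degree f \<ge> 2 \<and> rsquarefree f \<longrightarrow>
           tau f > C \<longrightarrow> dF (proots f) (proots (Top n \<alpha> f)) < \<epsilon>"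
proof (intro allI impI)
  fix \<epsilon> :: real assume "\<epsilon> > 0"
  define r where "r = min \<epsilon> 1"
  define A where "A = tail_weight n \<alpha>"
  define C where "C = 2 * real n + 2 + 10 * A * real n + 2 * A * real n ^ 2 / r + 4 * real n * 2 ^ n"
  have r: "0 < r" "r \<le> 1" "r \<le> \<epsilon>" using \<open>\<epsilon> > 0\<close> by (auto simp: r_def)
  have "0 \<le> A" by (simp add: A_def tail_weight_def sum_nonneg)
  then have terms: "0 \<le> 10 * A * real n" "0 \<le> 2 * A * real n ^ 2 / r" "0 \<le> 4 * real n * 2 ^ n"
    using r by auto
  have "dF (proots f) (proots (Top n \<alpha> f)) < \<epsilon>"
    if f: "degree f \<le> n \<and> degree f \<ge> 2 \<and> rsquarefree f" and tau: "tau f > C" for f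
  proof -
    have "2 * A * real n ^ 2 / r < tau f" using tau terms unfolding C_def by linarith
    then have sep_far: "2 * A * real n ^ 2 < r * tau f" using r by (simp add: field_simps)
    have "4 * real n * 2 ^ n * r \<le> 4 * real n * 2 ^ n" using r by (simp add: mult_left_le)
    then have sep: "2 * real n \<le> tau f" "2 * r \<le> tau f" "10 * A * real n \<le> tau f"
      "4 * real n * 2 ^ n * r \<le> tau f"
      using tau terms r unfolding C_def by linarith+
    have "well_separated n \<alpha> f r"
      unfolding well_separated_def A_def[symmetric] using f r(1) sep sep_far by blast
    then show ?thesis using well_separated.dF_roots_Top_less r(3) by fastforce
  qed
  moreover have "C > 0" using terms unfolding C_def by linarith
  ultimately show "\<exists>C>0. \<forall>f :: complex poly. degree f \<le> n \<and> degree f \<ge> 2 \<and> rsquarefree f \<longrightarrow>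
           tau f > C \<longrightarrow> dF (proots f) (proots (Top n \<alpha> f)) < \<epsilon>" by blast
qed

end
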